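(* Let $g(x)=\sin(x)^2$ and for positive integers $m,n$ let $\tilde{G}(m,n)=\frac{1}{\pi}\int_{-\pi/2}^{\pi/2}\prod_{i=0}^{n-1} g(x+mi\pi/n)\,dx$. Then $\tilde{G}(1,n)=\frac{2}{4^n}$ for every positive integer $n$, and $\tilde G(m,n)\ge\tilde G(1,n)$ for all positive integers $m,n$. *)

theory Defs
  imports "HOL-Analysis.Analysis"
begin

definition g :: "real \<Rightarrow> real" where
  "g x = (sin x)^2"

definition Gtilde :: "nat \<Rightarrow> nat \<Rightarrow> real" where
  "Gtilde m n = (1 / pi) *
     integral {-pi/2..pi/2} (\<lambda>x. \<Prod>i<n. g (x + real m * real i * pi / real n))"

end

theory Submission
  imports Defs "HOL-Computational_Algebra.Fundamental_Theorem_Algebra"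
begin

text \<open>
  Put \<open>u = cis (-2x)\<close> and \<open>\<gamma> = cis (2\<pi>m/n)\<close>. Each factor is a squared chord of the unit circle,
  \<open>4 g (x + m i \<pi>/n) = |u - \<gamma>\<^sup>i|\<^sup>2\<close>, and \<open>\<gamma>\<close> is a primitive \<open>k\<close>-th root of unity with
  \<open>k = n/d\<close>, \<open>d = gcd m n\<close>. Hence the product over \<open>i < n\<close> runs \<open>d\<close> times over all \<open>k\<close>-th roots
  of unity and equals \<open>|u\<^sup>k - 1|\<^sup>2\<^sup>d / 4\<^sup>n = (4 sin\<^sup>2 (k x))\<^sup>d / 4\<^sup>n\<close>. For \<open>m = 1\<close> we have
  \<open>d = 1\<close> and the integral is elementary; in general Bernoulli's inequality
  \<open>(4s)\<^sup>d \<ge> 1 + d (4s - 1)\<close>, with \<open>4 sin\<^sup>2\<close> of mean 2, gives \<open>Gtilde m n \<ge> (1 + d) / 4\<^sup>n \<ge> 2 / 4\<^sup>n\<close>.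
\<close>

lemma prod_minus_roots_unity:
  assumes "k > 0"
  shows "(\<Prod>z\<in>{z::complex. z^k = 1}. t - z) = t^k - 1"
proof -
  define p :: "complex poly" where "p = monom 1 k + [:-1:]"
  have poly_p: "poly p z = z^k - 1" for z
    unfolding p_def by (simp add: poly_monom)
  have "degree p = k"
    using assms unfolding p_def by (subst degree_add_eq_left) (auto simp: degree_monom_eq)
  then have "lead_coeff p = 1"
    using assms unfolding p_def by (cases k) (simp_all add: coeff_monom)
  moreover have "rsquarefree p"
    unfolding rsquarefree_roots
  proof (intro allI notI)
    fix a assume "poly p a = 0 \<and> poly (pderiv p) a = 0"
    moreover have "poly (pderiv p) a = of_nat k * a^(k-1)"
      unfolding p_def by (simp add: pderiv_add pderiv_monom poly_monom)
    ultimately show False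
      using assms by (auto simp: poly_p power_0_left)
  qed
  ultimately have "(\<Prod>z | poly p z = 0. [:-z, 1:]) = p"
    using complex_poly_decompose_rsquarefree by fastforce
  then have "poly (\<Prod>z | poly p z = 0. [:-z, 1:]) t = poly p t" by simp
  then show ?thesis by (simp add: poly_prod poly_p)
qed

lemma bij_betw_powers_primitive_root_unity:
  fixes \<gamma> :: complex
  assumes "k > 0" "\<gamma>^k = 1" and primitive: "\<And>j. 0 < j \<Longrightarrow> j < k \<Longrightarrow> \<gamma>^j \<noteq> 1"
  shows "bij_betw (\<lambda>i. \<gamma>^i) {..<k} {z. z^k = 1}"
proof -
  have "\<gamma> \<noteq> 0" using assms by (auto simp: power_0_left)
  have inj: "inj_on (\<lambda>i. \<gamma>^i) {..<k}"
  proof (rule linorder_inj_onI')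
    fix i j assume "j \<in> {..<k}" "i < j"
    moreover have "\<gamma>^j = \<gamma>^i * \<gamma>^(j - i)"
      using \<open>i < j\<close> by (simp flip: power_add)
    ultimately show "\<gamma>^i \<noteq> \<gamma>^j"
      using primitive[of "j - i"] \<open>\<gamma> \<noteq> 0\<close> by auto
  qed
  have sub: "(\<lambda>i. \<gamma>^i) ` {..<k} \<subseteq> {z. z^k = 1}"
  proof safe
    fix i
    have "(\<gamma>^i)^k = (\<gamma>^k)^i"
      by (simp flip: power_mult add: mult.commute)
    then show "(\<gamma>^i)^k = 1"
      using \<open>\<gamma>^k = 1\<close> by simp
  qed
  have "card ((\<lambda>i. \<gamma>^i) ` {..<k}) = card {z::complex. z^k = 1}"
    using inj card_roots_unity_eq assms by (simp add: card_image)
  then have "(\<lambda>i. \<gamma>^i) ` {..<k} = {z. z^k = 1}"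
    using sub finite_roots_unity assms by (intro card_subset_eq) auto
  with inj show ?thesis by (simp add: bij_betw_def)
qed

lemma prod_periodic_power:
  fixes \<gamma> :: "'a::monoid_mult"
  assumes "\<gamma>^k = 1"
  shows "(\<Prod>i<q*k. f (\<gamma>^i)) = (\<Prod>i<k. f (\<gamma>^i))^q"
proof -
  have "(\<Prod>i<q*k. f (\<gamma>^i)) = (\<Prod>r<q. \<Prod>i\<in>{r*k..<r*k+k}. f (\<gamma>^i))"
    by (rule prod.nat_group[symmetric])
  also have "\<dots> = (\<Prod>r<q. \<Prod>i<k. f (\<gamma>^i))"
  proof (rule prod.cong[OF refl])
    fix r
    have "\<gamma>^(i + r*k) = \<gamma>^i" for i
      using assms by (simp add: power_add power_mult mult.commute[of r])
    then show "(\<Prod>i\<in>{r*k..<r*k+k}. f (\<gamma>^i)) = (\<Prod>i<k. f (\<gamma>^i))"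
      using prod.shift_bounds_nat_ivl[of "\<lambda>i. f (\<gamma>^i)" 0 "r*k" k]
      by (simp add: add.commute atLeast0LessThan)
  qed
  finally show ?thesis by simp
qed

lemma dvd_mult_iff_div_gcd_dvd:
  fixes m n j :: nat
  assumes "n > 0"
  shows "n dvd m * j \<longleftrightarrow> n div gcd m n dvd j"
proof -
  define d where "d = gcd m n"
  have "d > 0" using assms by (simp add: d_def)
  have m: "m = d * (m div d)" and n: "n = d * (n div d)" by (simp_all add: d_def)
  have "coprime (n div d) (m div d)"
    using div_gcd_coprime[of n m] assms by (simp add: d_def gcd.commute)
  have "n dvd m * j \<longleftrightarrow> d * (n div d) dvd d * ((m div d) * j)"
    using m n by (metis mult.assoc)
  also have "\<dots> \<longleftrightarrow> n div d dvd (m div d) * j"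
    using \<open>d > 0\<close> by simp
  also have "\<dots> \<longleftrightarrow> n div d dvd j"
    using \<open>coprime (n div d) (m div d)\<close> by (simp add: coprime_dvd_mult_right_iff)
  finally show ?thesis by (simp add: d_def)
qed

lemma cis_power_eq_1_iff:
  assumes "n > 0"
  shows "cis (2 * pi * real m / real n) ^ j = 1 \<longleftrightarrow> n div gcd m n dvd j"
proof -
  have "cis (2 * pi * real m / real n) ^ j = cis (2 * pi * real (m * j) / real n)"
    by (simp add: Complex.DeMoivre field_simps)
  also have "\<dots> = exp (2 * of_real pi * \<i> * of_nat (m * j) / of_nat n)"
    unfolding cis_conv_exp by (simp add: mult_ac)
  finally show ?thesis
    using complex_root_unity_eq_1[of n "m * j"] dvd_mult_iff_div_gcd_dvd assms by simp
qed

lemma norm_cis_diff_squared: "(cmod (cis a - cis b))^2 = 4 * sin ((b - a)/2)^2"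
proof -
  have "(cmod (cis a - cis b))^2 = (cos a - cos b)^2 + (sin a - sin b)^2"
    by (simp add: cmod_power2)
  also have "\<dots> = 2 - 2 * cos (b - a)"
    by (simp add: cos_diff power2_eq_square algebra_simps)
  also have "cos (b - a) = 1 - 2 * sin ((b - a)/2)^2"
    using cos_double_sin[of "(b - a)/2"] by (simp only: mult_2 field_sum_of_halves)
  finally show ?thesis by simp
qed

lemma prod_g_shifts:
  assumes "m > 0" "n > 0"
  shows "(\<Prod>i<n. g (x + real m * real i * pi / real n)) =
           (4 * sin (real (n div gcd m n) * x)^2) ^ gcd m n / 4^n"
proof -
  define d where "d = gcd m n"
  define k where "k = n div d"
  define \<gamma> where "\<gamma> = cis (2 * pi * real m / real n)"
  define u where "u = cis (-2 * x)"
  have n: "n = d * k" by (simp add: d_def k_def)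
  have order: "\<gamma>^j = 1 \<longleftrightarrow> k dvd j" for j
    unfolding \<gamma>_def k_def d_def by (rule cis_power_eq_1_iff[OF assms(2)])
  then have "k > 0" using assms n by (metis dvd_0_left mult_0_right neq0_conv)
  have chord: "g (x + real m * real i * pi / real n) = (cmod (u - \<gamma>^i))^2 / 4" for i
  proof -
    have \<gamma>_power: "\<gamma>^i = cis (2 * (real m * real i * pi / real n))"
      unfolding \<gamma>_def Complex.DeMoivre by (simp add: field_simps)
    have half_angle: "(2 * (real m * real i * pi / real n) - -2 * x) / 2 = x + real m * real i * pi / real n"
      by simp
    show ?thesis
      unfolding g_def u_def \<gamma>_power norm_cis_diff_squared half_angle by simp
  qed
  have "(\<Prod>i<n. g (x + real m * real i * pi / real n)) = (cmod (\<Prod>i<n. u - \<gamma>^i))^2 / 4^n"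
    by (simp add: chord prod_dividef flip: prod_power_distrib prod_norm)
  also have "(\<Prod>i<n. u - \<gamma>^i) = (\<Prod>i<k. u - \<gamma>^i)^d"
    using n prod_periodic_power[of \<gamma> k "\<lambda>z. u - z" d] order by (simp add: mult.commute)
  also have "(\<Prod>i<k. u - \<gamma>^i) = (\<Prod>z\<in>{z. z^k = 1}. u - z)"
    using \<open>k > 0\<close> order
    by (intro prod.reindex_bij_betw[of "\<lambda>i. \<gamma>^i" _ _ "\<lambda>z. u - z"] bij_betw_powers_primitive_root_unity) auto
  also have "\<dots> = u^k - 1"
    using \<open>k > 0\<close> by (simp add: prod_minus_roots_unity)
  also have "(cmod ((u^k - 1)^d))^2 = ((cmod (cis (-2 * (real k * x)) - cis 0))^2)^d"
    by (simp add: u_def Complex.DeMoivre norm_power power_mult[symmetric] mult_ac)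
  also have "\<dots> = (4 * sin (real k * x)^2)^d"
    unfolding norm_cis_diff_squared by simp
  finally show ?thesis by (simp add: d_def k_def)
qed

lemma has_integral_sin_mult_squared:
  assumes "k > 0"
  shows "((\<lambda>x. sin (real k * x)^2) has_integral pi/2) {-pi/2..pi/2}"
proof -
  define F where "F x = x/2 - sin (2 * real k * x) / (4 * real k)" for x
  have "(F has_vector_derivative sin (real k * x)^2) (at x within {-pi/2..pi/2})" for x
  proof -
    have "(F has_real_derivative (1/2 - cos (2 * real k * x) * (2 * real k) / (4 * real k))) (at x)"
      unfolding F_def by (auto intro!: derivative_eq_intros)
    moreover have "1/2 - cos (2 * real k * x) * (2 * real k) / (4 * real k) = sin (real k * x)^2"
      using assms cos_double_sin[of "real k * x"] by (simp add: field_simps)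
    ultimately show ?thesis
      by (simp add: has_real_derivative_iff_has_vector_derivative has_vector_derivative_at_within)
  qed
  then have "((\<lambda>x. sin (real k * x)^2) has_integral F (pi/2) - F (-pi/2)) {-pi/2..pi/2}"
    by (intro fundamental_theorem_of_calculus) auto
  moreover have "F (pi/2) - F (-pi/2) = pi/2"
    using sin_npi[of k] unfolding F_def by simp
  ultimately show ?thesis by metis
qed

lemma integral_sin_squared_power_ge:
  assumes "k > 0"
  shows "pi * (1 + real q) \<le> integral {-pi/2..pi/2} (\<lambda>x. (4 * sin (real k * x)^2)^q)"
proof -
  define h where "h x = (1 - real q) + 4 * real q * sin (real k * x)^2" for x
  have "(h has_integral (pi * (1 - real q) + 4 * real q * (pi/2))) {-pi/2..pi/2}"
    unfolding h_def
    using has_integral_const_real[of "1 - real q" "-pi/2" "pi/2"]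
      has_integral_mult_right[OF has_integral_sin_mult_squared[OF assms], of "4 * real q"]
    by (intro has_integral_add) auto
  moreover have "(\<lambda>x. (4 * sin (real k * x)^2)^q) integrable_on {-pi/2..pi/2}"
    by (intro integrable_continuous_interval continuous_intros)
  moreover have "h x \<le> (4 * sin (real k * x)^2)^q" for x
    using Bernoulli_inequality[of "4 * sin (real k * x)^2 - 1" q]
    by (simp add: h_def algebra_simps)
  ultimately have "pi * (1 - real q) + 4 * real q * (pi/2) \<le> integral {-pi/2..pi/2} (\<lambda>x. (4 * sin (real k * x)^2)^q)"
    by (intro has_integral_le[OF _ integrable_integral]) auto
  then show ?thesis by (simp add: algebra_simps)
qed

lemma Gtilde_eq_integral_sin_power:
  assumes "m > 0" "n > 0"
  shows "Gtilde m n =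
           integral {-pi/2..pi/2} (\<lambda>x. (4 * sin (real (n div gcd m n) * x)^2) ^ gcd m n) / (pi * 4^n)"
  unfolding Gtilde_def prod_g_shifts[OF assms] by simp

lemma Gtilde_1:
  assumes "n > 0"
  shows "Gtilde 1 n = 2 / 4^n"
proof -
  have "Gtilde 1 n = integral {-pi/2..pi/2} (\<lambda>x. (4 * sin (real n * x)^2) ^ 1) / (pi * 4^n)"
    using Gtilde_eq_integral_sin_power[of 1 n] assms by simp
  also have "integral {-pi/2..pi/2} (\<lambda>x. (4 * sin (real n * x)^2) ^ 1) = 4 * (pi/2)"
    using has_integral_mult_right[OF has_integral_sin_mult_squared[OF assms], of 4]
    by (intro integral_unique) simp
  finally show ?thesis by simp
qed

lemma Gtilde_ge:
  assumes "m > 0" "n > 0"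
  shows "(1 + real (gcd m n)) / 4^n \<le> Gtilde m n"
proof -
  have "n div gcd m n > 0"
    using assms by (simp add: div_greater_zero_iff gcd_le2_nat)
  then have "pi * (1 + real (gcd m n)) \<le>
               integral {-pi/2..pi/2} (\<lambda>x. (4 * sin (real (n div gcd m n) * x)^2) ^ gcd m n)"
    by (rule integral_sin_squared_power_ge)
  from divide_right_mono[OF this, of "pi * 4^n"] show ?thesis
    unfolding Gtilde_eq_integral_sin_power[OF assms] by simp
qed

theorem corollary5p2:
  shows "(\<forall>n::nat. n > 0 \<longrightarrow> Gtilde 1 n = 2 / 4 ^ n) \<and>
         (\<forall>m n::nat. m > 0 \<longrightarrow> n > 0 \<longrightarrow> Gtilde m n \<ge> Gtilde 1 n)"
proof (intro conjI allI impI)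
  fix m n :: nat
  assume "m > 0" "n > 0"
  then have "1 \<le> gcd m n"
    by (simp add: Suc_le_eq)
  then have "2 / 4^n \<le> (1 + real (gcd m n)) / 4^n"
    by (simp add: divide_right_mono)
  also have "\<dots> \<le> Gtilde m n"
    using Gtilde_ge \<open>m > 0\<close> \<open>n > 0\<close> .
  finally show "Gtilde 1 n \<le> Gtilde m n"
    using Gtilde_1 \<open>n > 0\<close> by simp
qed (rule Gtilde_1)

end
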